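(* Let $d\geq 2$, let $\rho^s$ be a state on $H_d=\mathbb{C}^d$, and let $A$ and $B$ be auxiliary qudits ($d$-dimensional systems) each prepared in $|0\rangle\langle 0|$. Then there exists an incoherent operation $\Lambda$ on $H_d\otimes H_d\otimes H_d$ such that $\Lambda(\rho^s\otimes|0\rangle\langle 0|^A\otimes|0\rangle\langle 0|^B)$ is genuinely tripartite entangled if and only if $\rho^s$ is coherent.
   Context: Coherence is with respect to the computational basis of $H_d$ and the product computational basis of $H_d^{\otimes 3}$; a state is incoherent if it is diagonal in this basis and coherent otherwise. An incoherent operation is a completely positive trace-preserving map $\Lambda(\rho)=\sum_j K_j\rho K_j^\dagger$ whose Kraus operators map incoherent states to (unnormalized) incoherent states. A pure tripartite state is biseparable if it is a product state with respect to some bipartition of the three parties into two nonempty groups; a tripartite mixed state is genuinely tripartite entangled if it cannot be written as a convex combination of biseparable pure states (possibly with respect to different bipartitions). *)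

theory Defs
  imports "Jordan_Normal_Form.Schur_Decomposition"
begin

text \<open>The computational basis of C^n is the standard basis; H_d^{(x)3} is C^(d^3)
  with product basis index |i,j,k> = (i*d + j)*d + k (Kronecker convention).\<close>

definition density :: "nat \<Rightarrow> complex mat \<Rightarrow> bool" where
  "density n \<rho> \<longleftrightarrow> \<rho> \<in> carrier_mat n n \<and> mat_adjoint \<rho> = \<rho> \<and> (\<Sum>i<n. \<rho> $$ (i, i)) = 1 \<and>
     (\<forall>v \<in> carrier_vec n. 0 \<le> Re (\<Sum>i<n. \<Sum>j<n. cnj (v $ i) * \<rho> $$ (i, j) * v $ j))"

definition is_diag :: "nat \<Rightarrow> complex mat \<Rightarrow> bool" where
  "is_diag n M \<longleftrightarrow> (\<forall>i<n. \<forall>j<n. i \<noteq> j \<longrightarrow> M $$ (i, j) = 0)"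

definition incoherent_state :: "nat \<Rightarrow> complex mat \<Rightarrow> bool" where
  "incoherent_state n \<rho> \<longleftrightarrow> density n \<rho> \<and> is_diag n \<rho>"

definition coherent_state :: "nat \<Rightarrow> complex mat \<Rightarrow> bool" where
  "coherent_state n \<rho> \<longleftrightarrow> density n \<rho> \<and> \<not> is_diag n \<rho>"

definition kraus_channel :: "nat \<Rightarrow> complex mat list \<Rightarrow> bool" where
  "kraus_channel n Ks \<longleftrightarrow> set Ks \<subseteq> carrier_mat n n \<and>
     foldr (\<lambda>K acc. mat_adjoint K * K + acc) Ks (0\<^sub>m n n) = 1\<^sub>m n"

definition apply_kraus :: "nat \<Rightarrow> complex mat list \<Rightarrow> complex mat \<Rightarrow> complex mat" where
  "apply_kraus n Ks \<rho> = foldr (\<lambda>K acc. K * \<rho> * mat_adjoint K + acc) Ks (0\<^sub>m n n)"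

definition incoherent_operation :: "nat \<Rightarrow> complex mat list \<Rightarrow> bool" where
  "incoherent_operation n Ks \<longleftrightarrow> kraus_channel n Ks \<and>
     (\<forall>K \<in> set Ks. \<forall>\<sigma>. incoherent_state n \<sigma> \<longrightarrow> is_diag n (K * \<sigma> * mat_adjoint K))"

definition kron :: "complex mat \<Rightarrow> complex mat \<Rightarrow> complex mat" where
  "kron A B = mat (dim_row A * dim_row B) (dim_col A * dim_col B)
     (\<lambda>(r, c). A $$ (r div dim_row B, c div dim_col B) * B $$ (r mod dim_row B, c mod dim_col B))"

definition ket0_proj :: "nat \<Rightarrow> complex mat" where
  "ket0_proj d = mat d d (\<lambda>(i, j). if i = 0 \<and> j = 0 then 1 else 0)"

definition unit_vec_c :: "nat \<Rightarrow> complex vec \<Rightarrow> bool" where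
  "unit_vec_c n \<psi> \<longleftrightarrow> \<psi> \<in> carrier_vec n \<and> (\<Sum>i<n. (cmod (\<psi> $ i))\<^sup>2) = 1"

definition biseparable_pure :: "nat \<Rightarrow> complex vec \<Rightarrow> bool" where
  "biseparable_pure d \<psi> \<longleftrightarrow>
     (\<exists>a b. \<forall>i<d. \<forall>j<d. \<forall>k<d. \<psi> $ ((i * d + j) * d + k) = a i * b j k) \<or>
     (\<exists>a b. \<forall>i<d. \<forall>j<d. \<forall>k<d. \<psi> $ ((i * d + j) * d + k) = a j * b i k) \<or>
     (\<exists>a b. \<forall>i<d. \<forall>j<d. \<forall>k<d. \<psi> $ ((i * d + j) * d + k) = a k * b i j)"

definition biseparable_mixed :: "nat \<Rightarrow> complex mat \<Rightarrow> bool" where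
  "biseparable_mixed d \<rho> \<longleftrightarrow>
     (\<exists>(m::nat) (p::nat \<Rightarrow> real) (\<psi>::nat \<Rightarrow> complex vec).
        (\<forall>l<m. 0 \<le> p l \<and> unit_vec_c (d^3) (\<psi> l) \<and> biseparable_pure d (\<psi> l)) \<and>
        (\<Sum>l<m. p l) = 1 \<and>
        \<rho> = mat (d^3) (d^3) (\<lambda>(r, c). \<Sum>l<m. complex_of_real (p l) * \<psi> l $ r * cnj (\<psi> l $ c)))"

definition genuinely_tripartite_entangled :: "nat \<Rightarrow> complex mat \<Rightarrow> bool" where
  "genuinely_tripartite_entangled d \<rho> \<longleftrightarrow> density (d^3) \<rho> \<and> \<not> biseparable_mixed d \<rho>"

end

theory Submission
  imports Defs
begin

(* If rho is diagonal, so is the input rho (x) |0><0| (x) |0><0|; incoherent operations keep it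
   diagonal, and a diagonal state is a mixture of product basis states, hence biseparable.
   Conversely, the permutation unitary |x,y,z> -> |x, y+x, z+x> (mod d) is incoherent and maps the
   input to sum_ij rho_ij |iii><jjj|.  All diagonal entries off the GHZ indices |ttt> vanish, so
   every pure component of a decomposition vanishes there; for a biseparable component this forces
   psi(iii) psi(jjj)* = 0 when i <> j, so a coherence rho_ij <> 0 rules out biseparability. *)

lemma dim_mat_adjoint [simp]:
  "dim_row (mat_adjoint A) = dim_col A" "dim_col (mat_adjoint A) = dim_row A"
  unfolding mat_adjoint_def by (auto simp: mat_of_rows_def)

lemma index_mat_adjoint [simp]:
  "i < dim_col A \<Longrightarrow> j < dim_row A \<Longrightarrow> mat_adjoint A $$ (i, j) = cnj (A $$ (j, i))"
  unfolding mat_adjoint_def by (auto simp: mat_of_rows_def)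

lemma mat_adjoint_carrier:
  assumes "A \<in> carrier_mat n m"
  shows "mat_adjoint A \<in> carrier_mat m n"
  using carrier_matD[OF assms] by (intro carrier_matI) simp_all

lemma index_mult_mat_sum:
  "i < dim_row A \<Longrightarrow> j < dim_col B \<Longrightarrow> dim_col A = dim_row B \<Longrightarrow>
   (A * B) $$ (i, j) = (\<Sum>k<dim_col A. A $$ (i, k) * B $$ (k, j))"
  by (simp add: scalar_prod_def lessThan_atLeast0)

lemma sum_sum_delta:
  fixes G :: "nat \<Rightarrow> nat \<Rightarrow> 'a :: comm_monoid_add"
  assumes "a < n" "b < m"
  shows "(\<Sum>r<n. \<Sum>c<m. if r = a \<and> c = b then G r c else 0) = G a b"
proof -
  have "(\<Sum>c<m. if r = a \<and> c = b then G r c else 0) = (if r = a then G r b else 0)" for r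
    using assms(2) by (cases "r = a") simp_all
  then show ?thesis
    using assms(1) by simp
qed

lemma sum_swap_pairs:
  "(\<Sum>a\<in>A. \<Sum>b\<in>B. \<Sum>i\<in>I. \<Sum>j\<in>J. F a b i j) = (\<Sum>i\<in>I. \<Sum>j\<in>J. \<Sum>a\<in>A. \<Sum>b\<in>B. F a b i j)"
proof -
  have "(\<Sum>a\<in>A. \<Sum>b\<in>B. \<Sum>i\<in>I. \<Sum>j\<in>J. F a b i j) = (\<Sum>a\<in>A. \<Sum>i\<in>I. \<Sum>b\<in>B. \<Sum>j\<in>J. F a b i j)"
    by (rule sum.cong[OF refl], rule sum.swap)
  also have "\<dots> = (\<Sum>i\<in>I. \<Sum>a\<in>A. \<Sum>j\<in>J. \<Sum>b\<in>B. F a b i j)"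
    by (subst sum.swap) (rule sum.cong[OF refl], rule sum.cong[OF refl], rule sum.swap)
  also have "\<dots> = (\<Sum>i\<in>I. \<Sum>j\<in>J. \<Sum>a\<in>A. \<Sum>b\<in>B. F a b i j)"
    by (rule sum.cong[OF refl], rule sum.swap)
  finally show ?thesis .
qed

(* For injective h this is V rho V^dagger with the isometry V e_i = e_(h i); the sum form avoids
   inverting h. *)
definition embed_mat :: "nat \<Rightarrow> nat \<Rightarrow> (nat \<Rightarrow> nat) \<Rightarrow> complex mat \<Rightarrow> complex mat" where
  "embed_mat n d h \<rho> =
     mat n n (\<lambda>(r, c). \<Sum>i<d. \<Sum>j<d. if h i = r \<and> h j = c then \<rho> $$ (i, j) else 0)"

lemma embed_mat_carrier [simp]: "embed_mat n d h \<rho> \<in> carrier_mat n n"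
  by (simp add: embed_mat_def)

lemma dim_embed_mat [simp]: "dim_row (embed_mat n d h \<rho>) = n" "dim_col (embed_mat n d h \<rho>) = n"
  by (simp_all add: embed_mat_def)

lemma index_embed_mat:
  "r < n \<Longrightarrow> c < n \<Longrightarrow>
   embed_mat n d h \<rho> $$ (r, c) = (\<Sum>i<d. \<Sum>j<d. if h i = r \<and> h j = c then \<rho> $$ (i, j) else 0)"
  by (simp add: embed_mat_def)

lemma embed_mat_cong:
  "(\<And>i. i < d \<Longrightarrow> h i = h' i) \<Longrightarrow> embed_mat n d h \<rho> = embed_mat n d h' \<rho>"
  unfolding embed_mat_def by (intro cong_mat refl) (auto intro!: sum.cong)

lemma embed_mat_at:
  assumes "inj_on h {..<d}" "a < d" "b < d" "h a < n" "h b < n"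
  shows "embed_mat n d h \<rho> $$ (h a, h b) = \<rho> $$ (a, b)"
proof -
  have "embed_mat n d h \<rho> $$ (h a, h b) =
        (\<Sum>i<d. \<Sum>j<d. if i = a \<and> j = b then \<rho> $$ (i, j) else 0)"
    using assms by (auto simp: index_embed_mat inj_on_eq_iff intro!: sum.cong)
  then show ?thesis
    using assms(2,3) by (simp add: sum_sum_delta)
qed

lemma embed_mat_outside:
  "r < n \<Longrightarrow> c < n \<Longrightarrow> r \<notin> h ` {..<d} \<Longrightarrow> embed_mat n d h \<rho> $$ (r, c) = 0"
  by (auto simp: index_embed_mat intro!: sum.neutral)

lemma embed_mat_embed_mat:
  assumes h: "\<And>i. i < d \<Longrightarrow> h i < m"
  shows "embed_mat n m g (embed_mat m d h \<rho>) = embed_mat n d (g \<circ> h) \<rho>"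
proof (rule eq_matI)
  fix r c assume "r < dim_row (embed_mat n d (g \<circ> h) \<rho>)" "c < dim_col (embed_mat n d (g \<circ> h) \<rho>)"
  then have rc: "r < n" "c < n" by simp_all
  have "embed_mat n m g (embed_mat m d h \<rho>) $$ (r, c) =
        (\<Sum>a<m. \<Sum>b<m. \<Sum>i<d. \<Sum>j<d.
           if h i = a \<and> h j = b \<and> g a = r \<and> g b = c then \<rho> $$ (i, j) else 0)"
    using rc by (auto simp: index_embed_mat sum_distrib_left intro!: sum.cong)
  also have "\<dots> = (\<Sum>i<d. \<Sum>j<d. \<Sum>a<m. \<Sum>b<m.
           if a = h i \<and> b = h j then (if g a = r \<and> g b = c then \<rho> $$ (i, j) else 0) else 0)"
    by (subst sum_swap_pairs) (auto intro!: sum.cong)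
  also have "\<dots> = embed_mat n d (g \<circ> h) \<rho> $$ (r, c)"
    using rc h by (simp add: index_embed_mat sum_sum_delta)
  finally show "embed_mat n m g (embed_mat m d h \<rho>) $$ (r, c) = embed_mat n d (g \<circ> h) \<rho> $$ (r, c)" .
qed simp_all

lemma is_diag_embed_mat:
  assumes "is_diag d \<rho>"
  shows "is_diag n (embed_mat n d h \<rho>)"
  unfolding is_diag_def
proof (intro allI impI)
  fix r c assume rc: "r < n" "c < n" "r \<noteq> c"
  have "(if h i = r \<and> h j = c then \<rho> $$ (i, j) else 0) = 0" if "i < d" "j < d" for i j
    using that rc(3) assms unfolding is_diag_def by (cases "i = j") auto
  then show "embed_mat n d h \<rho> $$ (r, c) = 0"
    using rc by (simp add: index_embed_mat)
qed

definition perm_mat :: "nat \<Rightarrow> (nat \<Rightarrow> nat) \<Rightarrow> complex mat" where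
  "perm_mat n f = mat n n (\<lambda>(r, c). if r = f c then 1 else 0)"

lemma perm_mat_carrier: "perm_mat n f \<in> carrier_mat n n"
  by (simp add: perm_mat_def)

lemma dim_perm_mat [simp]: "dim_row (perm_mat n f) = n" "dim_col (perm_mat n f) = n"
  by (simp_all add: perm_mat_def)

lemma index_perm_mat [simp]: "r < n \<Longrightarrow> c < n \<Longrightarrow> perm_mat n f $$ (r, c) = (if r = f c then 1 else 0)"
  by (simp add: perm_mat_def)

lemma perm_mat_conj:
  assumes \<sigma>: "\<sigma> \<in> carrier_mat n n"
  shows "perm_mat n f * \<sigma> * mat_adjoint (perm_mat n f) = embed_mat n n f \<sigma>"
proof (rule eq_matI)
  fix r c assume "r < dim_row (embed_mat n n f \<sigma>)" "c < dim_col (embed_mat n n f \<sigma>)"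
  then have rc: "r < n" "c < n" by simp_all
  have dims: "dim_row \<sigma> = n" "dim_col \<sigma> = n"
    using \<sigma> by auto
  have left: "(perm_mat n f * \<sigma>) $$ (r, b) = (\<Sum>a<n. if f a = r then \<sigma> $$ (a, b) else 0)"
    if "b < n" for b
    using rc that dims
    by (auto simp: index_mult_mat_sum perm_mat_def simp del: index_mult_mat(1) intro!: sum.cong)
  have "(perm_mat n f * \<sigma> * mat_adjoint (perm_mat n f)) $$ (r, c) =
        (\<Sum>b<n. (perm_mat n f * \<sigma>) $$ (r, b) * (if f b = c then 1 else 0))"
    using rc dims
    by (auto simp: index_mult_mat_sum perm_mat_def simp del: index_mult_mat(1) intro!: sum.cong)
  also have "\<dots> = (\<Sum>a<n. \<Sum>b<n. if f a = r \<and> f b = c then \<sigma> $$ (a, b) else 0)"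
    by (subst sum.swap) (auto simp: left sum_distrib_right intro!: sum.cong)
  finally show "(perm_mat n f * \<sigma> * mat_adjoint (perm_mat n f)) $$ (r, c) = embed_mat n n f \<sigma> $$ (r, c)"
    using rc by (simp add: index_embed_mat)
qed (use \<sigma> in \<open>simp_all add: perm_mat_def\<close>)

lemma perm_mat_isometry:
  assumes f: "f ` {..<n} \<subseteq> {..<n}" and inj: "inj_on f {..<n}"
  shows "mat_adjoint (perm_mat n f) * perm_mat n f = 1\<^sub>m n"
proof (rule eq_matI)
  fix a b assume "a < dim_row (1\<^sub>m n :: complex mat)" "b < dim_col (1\<^sub>m n :: complex mat)"
  then have ab: "a < n" "b < n" by simp_all
  have "f a < n" using f ab by auto
  have "(mat_adjoint (perm_mat n f) * perm_mat n f) $$ (a, b) =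
        (\<Sum>r<n. mat_adjoint (perm_mat n f) $$ (a, r) * perm_mat n f $$ (r, b))"
    using ab by (simp add: index_mult_mat_sum del: index_mult_mat(1))
  also have "\<dots> = (\<Sum>r<n. if r = f a then (if f a = f b then 1 else 0) else 0)"
    using ab by (intro sum.cong) auto
  also have "\<dots> = 1\<^sub>m n $$ (a, b)"
    using ab \<open>f a < n\<close> inj by (auto simp: inj_on_eq_iff)
  finally show "(mat_adjoint (perm_mat n f) * perm_mat n f) $$ (a, b) = 1\<^sub>m n $$ (a, b)" .
qed simp_all

lemma incoherent_operation_perm_mat:
  assumes "f ` {..<n} \<subseteq> {..<n}" "inj_on f {..<n}"
  shows "incoherent_operation n [perm_mat n f]"
proof -
  have "kraus_channel n [perm_mat n f]"
    using perm_mat_isometry[OF assms] perm_mat_carrier[of n f] by (simp add: kraus_channel_def)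
  moreover have "is_diag n (perm_mat n f * \<sigma> * mat_adjoint (perm_mat n f))"
    if "incoherent_state n \<sigma>" for \<sigma>
    using that by (simp add: incoherent_state_def density_def perm_mat_conj is_diag_embed_mat)
  ultimately show ?thesis
    by (simp add: incoherent_operation_def)
qed

lemma apply_kraus_single:
  assumes "K \<in> carrier_mat n n" "\<sigma> \<in> carrier_mat n n"
  shows "apply_kraus n [K] \<sigma> = K * \<sigma> * mat_adjoint K"
proof -
  have "K * \<sigma> * mat_adjoint K \<in> carrier_mat n n"
    using mult_carrier_mat[OF mult_carrier_mat[OF assms] mat_adjoint_carrier[OF assms(1)]] .
  then show ?thesis
    by (simp add: apply_kraus_def)
qed

lemma is_diag_apply_kraus:
  assumes "\<And>K. K \<in> set Ks \<Longrightarrow> is_diag n (K * \<sigma> * mat_adjoint K)"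
  shows "is_diag n (apply_kraus n Ks \<sigma>)"
proof -
  have "is_diag n (apply_kraus n Ks \<sigma>) \<and> apply_kraus n Ks \<sigma> \<in> carrier_mat n n"
    using assms
  proof (induction Ks)
    case Nil
    then show ?case by (simp add: apply_kraus_def is_diag_def)
  next
    case (Cons K Ks)
    then show ?case by (auto simp: apply_kraus_def is_diag_def)
  qed
  then show ?thesis ..
qed

lemma incoherent_operation_is_diag:
  "incoherent_operation n Ks \<Longrightarrow> incoherent_state n \<sigma> \<Longrightarrow> is_diag n (apply_kraus n Ks \<sigma>)"
  unfolding incoherent_operation_def by (blast intro: is_diag_apply_kraus)

lemma sum_embed_mat:
  assumes h: "\<And>i. i < d \<Longrightarrow> h i < n"
  shows "(\<Sum>r<n. \<Sum>c<n. G r c * embed_mat n d h \<rho> $$ (r, c)) = (\<Sum>i<d. \<Sum>j<d. G (h i) (h j) * \<rho> $$ (i, j))"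
proof -
  have "(\<Sum>r<n. \<Sum>c<n. G r c * embed_mat n d h \<rho> $$ (r, c)) =
        (\<Sum>r<n. \<Sum>c<n. \<Sum>i<d. \<Sum>j<d. if r = h i \<and> c = h j then G r c * \<rho> $$ (i, j) else 0)"
    by (auto simp: index_embed_mat sum_distrib_left intro!: sum.cong)
  also have "\<dots> = (\<Sum>i<d. \<Sum>j<d. G (h i) (h j) * \<rho> $$ (i, j))"
    using h by (subst sum_swap_pairs) (simp add: sum_sum_delta)
  finally show ?thesis .
qed

lemma mat_adjoint_embed_mat:
  assumes "\<rho> \<in> carrier_mat d d" "mat_adjoint \<rho> = \<rho>"
  shows "mat_adjoint (embed_mat n d h \<rho>) = embed_mat n d h \<rho>"
proof (rule eq_matI)
  fix r c assume "r < dim_row (embed_mat n d h \<rho>)" "c < dim_col (embed_mat n d h \<rho>)"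
  then have rc: "r < n" "c < n" by simp_all
  have herm: "cnj (\<rho> $$ (j, i)) = \<rho> $$ (i, j)" if "i < d" "j < d" for i j
    using that assms(1) arg_cong[OF assms(2), of "\<lambda>A. A $$ (i, j)"] by simp
  have "mat_adjoint (embed_mat n d h \<rho>) $$ (r, c) =
        (\<Sum>i<d. \<Sum>j<d. if h i = c \<and> h j = r then \<rho> $$ (j, i) else 0)"
    using rc by (auto simp: index_embed_mat herm cnj_sum intro!: sum.cong)
  also have "\<dots> = embed_mat n d h \<rho> $$ (r, c)"
    using rc by (subst sum.swap) (auto simp: index_embed_mat intro!: sum.cong)
  finally show "mat_adjoint (embed_mat n d h \<rho>) $$ (r, c) = embed_mat n d h \<rho> $$ (r, c)" .
qed simp_all

lemma trace_embed_mat: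
  assumes "inj_on h {..<d}" "\<And>i. i < d \<Longrightarrow> h i < n"
  shows "(\<Sum>r<n. embed_mat n d h \<rho> $$ (r, r)) = (\<Sum>i<d. \<rho> $$ (i, i))"
proof -
  have "(\<Sum>r<n. embed_mat n d h \<rho> $$ (r, r)) = (\<Sum>r\<in>h ` {..<d}. embed_mat n d h \<rho> $$ (r, r))"
    using assms(2) by (intro sum.mono_neutral_right) (auto simp: embed_mat_outside)
  also have "\<dots> = (\<Sum>i<d. embed_mat n d h \<rho> $$ (h i, h i))"
    using assms(1) by (simp add: sum.reindex)
  also have "\<dots> = (\<Sum>i<d. \<rho> $$ (i, i))"
    using assms by (simp add: embed_mat_at)
  finally show ?thesis .
qed

lemma density_embed_mat:
  assumes inj: "inj_on h {..<d}" and h: "\<And>i. i < d \<Longrightarrow> h i < n" and \<rho>: "density d \<rho>"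
  shows "density n (embed_mat n d h \<rho>)"
proof -
  have car: "\<rho> \<in> carrier_mat d d" and adj: "mat_adjoint \<rho> = \<rho>"
    and tr: "(\<Sum>i<d. \<rho> $$ (i, i)) = 1"
    and pos: "\<And>v. v \<in> carrier_vec d \<Longrightarrow> 0 \<le> Re (\<Sum>i<d. \<Sum>j<d. cnj (v $ i) * \<rho> $$ (i, j) * v $ j)"
    using \<rho> unfolding density_def by auto
  have "0 \<le> Re (\<Sum>r<n. \<Sum>c<n. cnj (v $ r) * embed_mat n d h \<rho> $$ (r, c) * v $ c)" for v
  proof -
    have "(\<Sum>r<n. \<Sum>c<n. cnj (v $ r) * embed_mat n d h \<rho> $$ (r, c) * v $ c) =
          (\<Sum>r<n. \<Sum>c<n. (cnj (v $ r) * v $ c) * embed_mat n d h \<rho> $$ (r, c))"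
      by (simp add: ac_simps)
    also have "\<dots> = (\<Sum>i<d. \<Sum>j<d. (cnj (v $ h i) * v $ h j) * \<rho> $$ (i, j))"
      by (rule sum_embed_mat[OF h])
    also have "\<dots> = (\<Sum>i<d. \<Sum>j<d. cnj (v $ h i) * \<rho> $$ (i, j) * v $ h j)"
      by (simp add: ac_simps)
    finally show ?thesis
      using pos[of "vec d (\<lambda>i. v $ h i)"] by simp
  qed
  then show ?thesis
    using mat_adjoint_embed_mat[OF car adj] trace_embed_mat[OF inj h] tr by (simp add: density_def)
qed

lemma mod_add_right_inj:
  fixes x y y' :: nat
  assumes "y < d" "y' < d" "(y + x) mod d = (y' + x) mod d"
  shows "y = y'"
proof -
  have *: "a = b" if "b \<le> a" "a < d" "(a + x) mod d = (b + x) mod d" for a b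
  proof -
    have "d dvd a - b"
      using that mod_eq_dvd_iff_nat[of "b + x" "a + x" d] by simp
    moreover have "a - b < d"
      using that by simp
    ultimately show "a = b"
      using that(1) nat_dvd_not_less[of "a - b" d] by (cases "a = b") auto
  qed
  show ?thesis
    using *[of y' y] *[of y y'] assms by (cases "y' \<le> y") auto
qed

definition idx3 :: "nat \<Rightarrow> nat \<Rightarrow> nat \<Rightarrow> nat \<Rightarrow> nat" where
  "idx3 d x y z = (x * d + y) * d + z"

lemma idx3_less:
  assumes "x < d" "y < d" "z < d"
  shows "idx3 d x y z < d ^ 3"
proof -
  have "x * d + y < (x + 1) * d"
    using assms by simp
  also have "\<dots> \<le> d * d"
    using assms by (intro mult_le_mono1) simp
  finally have "x * d + y + 1 \<le> d * d"
    by simp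
  have "idx3 d x y z < (x * d + y + 1) * d"
    using assms by (simp add: idx3_def)
  also have "\<dots> \<le> d * d * d"
    using \<open>x * d + y + 1 \<le> d * d\<close> by (intro mult_le_mono1)
  finally show ?thesis
    by (simp add: power3_eq_cube)
qed

lemma idx3_div_mod [simp]:
  assumes "y < d" "z < d"
  shows "idx3 d x y z div d div d = x" "idx3 d x y z div d mod d = y" "idx3 d x y z mod d = z"
  using assms by (auto simp: idx3_def)

lemma idx3_eq_iff:
  assumes "y < d" "z < d" "y' < d" "z' < d"
  shows "idx3 d x y z = idx3 d x' y' z' \<longleftrightarrow> x = x' \<and> y = y' \<and> z = z'"
proof
  assume eq: "idx3 d x y z = idx3 d x' y' z'"
  show "x = x' \<and> y = y' \<and> z = z'"
    using arg_cong[OF eq, of "\<lambda>r. r div d div d"] arg_cong[OF eq, of "\<lambda>r. r div d mod d"]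
      arg_cong[OF eq, of "\<lambda>r. r mod d"] assms
    by simp
qed simp

lemma idx3_cases:
  assumes "r < d ^ 3"
  obtains x y z where "x < d" "y < d" "z < d" "r = idx3 d x y z"
proof -
  have "0 < d"
    using assms by (cases d) auto
  moreover have "r div d div d < d"
    using assms by (simp add: power3_eq_cube div_mult2_eq[symmetric] less_mult_imp_div_less)
  ultimately show thesis
    by (intro that[of "r div d div d" "r div d mod d" "r mod d"]) (simp_all add: idx3_def)
qed

definition cnot_idx :: "nat \<Rightarrow> nat \<Rightarrow> nat" where
  "cnot_idx d r = idx3 d (r div d div d)
     ((r div d mod d + r div d div d) mod d) ((r mod d + r div d div d) mod d)"

lemma cnot_idx_idx3:
  "y < d \<Longrightarrow> z < d \<Longrightarrow> cnot_idx d (idx3 d x y z) = idx3 d x ((y + x) mod d) ((z + x) mod d)"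
  by (simp add: cnot_idx_def)

lemma cnot_idx_less: "r < d ^ 3 \<Longrightarrow> cnot_idx d r < d ^ 3"
  by (elim idx3_cases) (simp add: cnot_idx_idx3 idx3_less)

lemma inj_on_cnot_idx: "inj_on (cnot_idx d) {..<d ^ 3}"
proof (rule inj_onI)
  fix r s assume "r \<in> {..<d ^ 3}" "s \<in> {..<d ^ 3}" and eq: "cnot_idx d r = cnot_idx d s"
  then have "r < d ^ 3" "s < d ^ 3"
    by simp_all
  obtain x y z where xyz: "x < d" "y < d" "z < d" "r = idx3 d x y z"
    using \<open>r < d ^ 3\<close> by (rule idx3_cases)
  obtain x' y' z' where xyz': "x' < d" "y' < d" "z' < d" "s = idx3 d x' y' z'"
    using \<open>s < d ^ 3\<close> by (rule idx3_cases)
  from xyz xyz' have "x = x'" "(y + x) mod d = (y' + x) mod d" "(z + x) mod d = (z' + x) mod d"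
    using eq by (auto simp: cnot_idx_idx3 idx3_eq_iff)
  then show "r = s"
    using xyz xyz' mod_add_right_inj by metis
qed

lemma kron_ket0_proj:
  assumes X: "X \<in> carrier_mat m m" and d: "0 < d"
  shows "kron X (ket0_proj d) = embed_mat (m * d) m (\<lambda>i. i * d) X"
proof (rule eq_matI)
  fix r c assume "r < dim_row (embed_mat (m * d) m (\<lambda>i. i * d) X)"
    "c < dim_col (embed_mat (m * d) m (\<lambda>i. i * d) X)"
  then have rc: "r < m * d" "c < m * d" by simp_all
  have mult_eq_iff: "i * d = s \<longleftrightarrow> s mod d = 0 \<and> i = s div d" for i s
  proof
    assume "i * d = s"
    then have "s = i * d" ..
    then show "s mod d = 0 \<and> i = s div d"
      using d by simp
  next
    assume "s mod d = 0 \<and> i = s div d"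
    then show "i * d = s"
      using div_mult_mod_eq[of s d] by simp
  qed
  have "embed_mat (m * d) m (\<lambda>i. i * d) X $$ (r, c) =
        (\<Sum>i<m. \<Sum>j<m. if i = r div d \<and> j = c div d
           then (if r mod d = 0 \<and> c mod d = 0 then X $$ (i, j) else 0) else 0)"
    unfolding index_embed_mat[OF rc] by (intro sum.cong refl) (auto simp: mult_eq_iff)
  also have "\<dots> = (if r mod d = 0 \<and> c mod d = 0 then X $$ (r div d, c div d) else 0)"
    using rc by (simp add: sum_sum_delta less_mult_imp_div_less)
  also have "\<dots> = kron X (ket0_proj d) $$ (r, c)"
    using rc d carrier_matD[OF X] by (simp add: kron_def ket0_proj_def)
  finally show "kron X (ket0_proj d) $$ (r, c) = embed_mat (m * d) m (\<lambda>i. i * d) X $$ (r, c)" ..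
qed (use X in \<open>simp_all add: kron_def ket0_proj_def\<close>)

lemma kron_ket0_proj_ket0_proj:
  assumes "\<rho> \<in> carrier_mat d d" "0 < d"
  shows "kron (kron \<rho> (ket0_proj d)) (ket0_proj d) = embed_mat (d ^ 3) d (\<lambda>i. idx3 d i 0 0) \<rho>"
proof -
  have "kron (kron \<rho> (ket0_proj d)) (ket0_proj d) =
        embed_mat (d * d * d) (d * d) (\<lambda>i. i * d) (embed_mat (d * d) d (\<lambda>i. i * d) \<rho>)"
    using assms by (simp add: kron_ket0_proj)
  also have "\<dots> = embed_mat (d * d * d) d ((\<lambda>i. i * d) \<circ> (\<lambda>i. i * d)) \<rho>"
    using assms(2) by (intro embed_mat_embed_mat) simp
  also have "\<dots> = embed_mat (d ^ 3) d (\<lambda>i. idx3 d i 0 0) \<rho>"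
    by (simp add: power3_eq_cube idx3_def comp_def)
  finally show ?thesis .
qed

lemma apply_kraus_cnot_idx:
  assumes "0 < d"
  shows "apply_kraus (d ^ 3) [perm_mat (d ^ 3) (cnot_idx d)] (embed_mat (d ^ 3) d (\<lambda>i. idx3 d i 0 0) \<rho>) =
         embed_mat (d ^ 3) d (\<lambda>i. idx3 d i i i) \<rho>"
proof -
  have "apply_kraus (d ^ 3) [perm_mat (d ^ 3) (cnot_idx d)] (embed_mat (d ^ 3) d (\<lambda>i. idx3 d i 0 0) \<rho>) =
        embed_mat (d ^ 3) (d ^ 3) (cnot_idx d) (embed_mat (d ^ 3) d (\<lambda>i. idx3 d i 0 0) \<rho>)"
    by (simp add: apply_kraus_single perm_mat_carrier perm_mat_conj)
  also have "\<dots> = embed_mat (d ^ 3) d (cnot_idx d \<circ> (\<lambda>i. idx3 d i 0 0)) \<rho>"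
    using assms by (intro embed_mat_embed_mat) (simp add: idx3_less)
  also have "\<dots> = embed_mat (d ^ 3) d (\<lambda>i. idx3 d i i i) \<rho>"
    using assms by (intro embed_mat_cong) (simp add: cnot_idx_idx3)
  finally show ?thesis .
qed

lemma inj_on_idx3_diag: "inj_on (\<lambda>t. idx3 d t t t) {..<d}"
  by (rule inj_onI) (simp add: idx3_eq_iff)

lemma density_diag:
  assumes "density n M" "l < n"
  shows "M $$ (l, l) = complex_of_real (Re (M $$ (l, l)))" "0 \<le> Re (M $$ (l, l))"
proof -
  have car: "M \<in> carrier_mat n n" and adj: "mat_adjoint M = M"
    and pos: "\<And>v. v \<in> carrier_vec n \<Longrightarrow> 0 \<le> Re (\<Sum>i<n. \<Sum>j<n. cnj (v $ i) * M $$ (i, j) * v $ j)"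
    using assms(1) by (simp_all add: density_def)
  have "cnj (M $$ (l, l)) = M $$ (l, l)"
    using assms(2) car arg_cong[OF adj, of "\<lambda>A. A $$ (l, l)"] by simp
  then have "Im (M $$ (l, l)) = 0"
    by (metis cnj.sel(2) neg_equal_zero)
  then show "M $$ (l, l) = complex_of_real (Re (M $$ (l, l)))"
    by (simp add: complex_eq_iff)
  let ?e = "unit_vec n l :: complex vec"
  have "(\<Sum>j<n. cnj (?e $ i) * M $$ (i, j) * ?e $ j) = (if i = l then M $$ (l, l) else 0)"
    if "i < n" for i
  proof -
    have "(\<Sum>j<n. cnj (?e $ i) * M $$ (i, j) * ?e $ j) = (\<Sum>j<n. if j = l then cnj (?e $ i) * M $$ (i, l) else 0)"
      using that assms(2) by (intro sum.cong) auto
    then show ?thesis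
      using that assms(2) by simp
  qed
  then have "(\<Sum>i<n. \<Sum>j<n. cnj (?e $ i) * M $$ (i, j) * ?e $ j) = M $$ (l, l)"
    using assms(2) by simp
  then show "0 \<le> Re (M $$ (l, l))"
    using pos[of ?e] by simp
qed

lemma biseparable_pure_unit_vec:
  assumes "l < d ^ 3"
  shows "biseparable_pure d (unit_vec (d ^ 3) l)"
proof -
  obtain x y z where xyz: "x < d" "y < d" "z < d" "l = idx3 d x y z"
    using assms by (rule idx3_cases)
  have "\<forall>i<d. \<forall>j<d. \<forall>k<d. (unit_vec (d ^ 3) l :: complex vec) $ idx3 d i j k =
      (if i = x then 1 else 0) * (if j = y \<and> k = z then 1 else 0)"
    using xyz by (auto simp: idx3_less idx3_eq_iff)
  then show ?thesis
    unfolding biseparable_pure_def idx3_def[symmetric]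
    by (intro disjI1 exI[of _ "\<lambda>i. if i = x then 1 else 0"]
        exI[of _ "\<lambda>j k. if j = y \<and> k = z then 1 else 0"])
qed

lemma biseparable_mixed_if_diag:
  assumes M: "density (d ^ 3) M" "is_diag (d ^ 3) M"
  shows "biseparable_mixed d M"
proof -
  let ?n = "d ^ 3"
  let ?e = "\<lambda>l. unit_vec ?n l :: complex vec"
  define p where "p l = Re (M $$ (l, l))" for l
  have car: "M \<in> carrier_mat ?n ?n"
    using M(1) by (simp add: density_def)
  have "M = mat ?n ?n (\<lambda>(r, c). \<Sum>l<?n. complex_of_real (p l) * ?e l $ r * cnj (?e l $ c))"
  proof (rule eq_matI)
    fix r c
    assume "r < dim_row (mat ?n ?n (\<lambda>(r, c). \<Sum>l<?n. complex_of_real (p l) * ?e l $ r * cnj (?e l $ c)))"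
      "c < dim_col (mat ?n ?n (\<lambda>(r, c). \<Sum>l<?n. complex_of_real (p l) * ?e l $ r * cnj (?e l $ c)))"
    then have rc: "r < ?n" "c < ?n"
      by simp_all
    have "(\<Sum>l<?n. complex_of_real (p l) * ?e l $ r * cnj (?e l $ c)) =
          (\<Sum>l<?n. if l = r then (if r = c then complex_of_real (p r) else 0) else 0)"
      using rc by (intro sum.cong) auto
    also have "\<dots> = M $$ (r, c)"
      using rc M(2) density_diag(1)[OF M(1) rc(1)] by (auto simp: is_diag_def p_def)
    finally show "M $$ (r, c) =
        mat ?n ?n (\<lambda>(r, c). \<Sum>l<?n. complex_of_real (p l) * ?e l $ r * cnj (?e l $ c)) $$ (r, c)"
      using rc by simp
  qed (use car in auto)
  moreover have "(\<Sum>l<?n. p l) = 1"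
    using M(1) by (simp add: density_def p_def flip: Re_sum)
  moreover have "0 \<le> p l \<and> unit_vec_c ?n (?e l) \<and> biseparable_pure d (?e l)" if "l < ?n" for l
  proof (intro conjI)
    have "(\<Sum>i<?n. (cmod (?e l $ i))\<^sup>2) = (\<Sum>i<?n. if i = l then 1 else 0)"
      using that by (intro sum.cong) auto
    then show "unit_vec_c ?n (?e l)"
      using that by (simp add: unit_vec_c_def)
  qed (use that density_diag(2)[OF M(1)] biseparable_pure_unit_vec in \<open>simp_all add: p_def\<close>)
  ultimately show ?thesis
    unfolding biseparable_mixed_def by (intro exI[of _ ?n] exI[of _ p] exI[of _ ?e]) blast
qed

lemma mixture_diag_zero:
  fixes m :: nat
  assumes M: "M = mat n n (\<lambda>(r, c). \<Sum>l<m. complex_of_real (p l) * \<psi> l $ r * cnj (\<psi> l $ c))"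
    and p: "\<And>l. l < m \<Longrightarrow> 0 \<le> p l" and r: "r < n" "M $$ (r, r) = 0" and l: "l < m"
  shows "p l = 0 \<or> \<psi> l $ r = 0"
proof -
  have "M $$ (r, r) = (\<Sum>l<m. complex_of_real (p l) * \<psi> l $ r * cnj (\<psi> l $ r))"
    using r(1) M by simp
  also have "\<dots> = complex_of_real (\<Sum>l<m. p l * (cmod (\<psi> l $ r))\<^sup>2)"
    unfolding of_real_sum of_real_mult complex_norm_square by (simp add: mult.assoc)
  finally have "(\<Sum>l<m. p l * (cmod (\<psi> l $ r))\<^sup>2) = 0"
    using r(2) by (metis of_real_eq_0_iff)
  then have "p l * (cmod (\<psi> l $ r))\<^sup>2 = 0"
    using p l by (subst (asm) sum_nonneg_eq_0_iff) auto
  then show ?thesis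
    by simp
qed

lemma biseparable_pure_ghz_product_zero:
  assumes "biseparable_pure d \<psi>" "i < d" "j < d"
    and "\<psi> $ idx3 d i j j = 0" "\<psi> $ idx3 d j i j = 0" "\<psi> $ idx3 d j j i = 0"
  shows "\<psi> $ idx3 d i i i * \<psi> $ idx3 d j j j = 0"
proof -
  consider
      (A) a b where "\<forall>x<d. \<forall>y<d. \<forall>z<d. \<psi> $ idx3 d x y z = a x * b y z"
    | (B) a b where "\<forall>x<d. \<forall>y<d. \<forall>z<d. \<psi> $ idx3 d x y z = a y * b x z"
    | (C) a b where "\<forall>x<d. \<forall>y<d. \<forall>z<d. \<psi> $ idx3 d x y z = a z * b x y"
    using assms(1) unfolding biseparable_pure_def idx3_def[symmetric] by blast
  then show ?thesis
  proof cases
    case (A a b)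
    then have "a i * b j j = 0"
      using assms(2-4) by simp
    then show ?thesis
      using A assms(2,3) by auto
  next
    case (B a b)
    then have "a i * b j j = 0"
      using assms(2,3,5) by simp
    then show ?thesis
      using B assms(2,3) by auto
  next
    case (C a b)
    then have "a i * b j j = 0"
      using assms(2,3,6) by simp
    then show ?thesis
      using C assms(2,3) by auto
  qed
qed

lemma ghz_not_biseparable_mixed:
  assumes ij: "i < d" "j < d" "i \<noteq> j" and \<rho>: "\<rho> $$ (i, j) \<noteq> 0"
  shows "\<not> biseparable_mixed d (embed_mat (d ^ 3) d (\<lambda>t. idx3 d t t t) \<rho>)"
proof
  let ?M = "embed_mat (d ^ 3) d (\<lambda>t. idx3 d t t t) \<rho>"
  assume "biseparable_mixed d ?M"
  then obtain m :: nat and p \<psi> where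
    mix: "\<forall>l<m. 0 \<le> p l \<and> unit_vec_c (d ^ 3) (\<psi> l) \<and> biseparable_pure d (\<psi> l)" and
    M: "?M = mat (d ^ 3) (d ^ 3) (\<lambda>(r, c). \<Sum>l<m. complex_of_real (p l) * \<psi> l $ r * cnj (\<psi> l $ c))"
    unfolding biseparable_mixed_def by blast
  have off_ghz: "p l = 0 \<or> \<psi> l $ idx3 d a b c = 0"
    if "l < m" "a < d" "b < d" "c < d" "\<not> (a = b \<and> b = c)" for l a b c
  proof (rule mixture_diag_zero[OF M])
    show lt: "idx3 d a b c < d ^ 3"
      using that by (simp add: idx3_less)
    have "idx3 d a b c \<notin> (\<lambda>t. idx3 d t t t) ` {..<d}"
      using that by (auto simp: idx3_eq_iff)
    then show "?M $$ (idx3 d a b c, idx3 d a b c) = 0"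
      by (rule embed_mat_outside[OF lt lt])
  qed (use mix that in auto)
  have term0: "complex_of_real (p l) * \<psi> l $ idx3 d i i i * cnj (\<psi> l $ idx3 d j j j) = 0"
    if "l \<in> {..<m}" for l
  proof (cases "p l = 0")
    case False
    have l: "l < m"
      using that by simp
    with False have "\<psi> l $ idx3 d i j j = 0" "\<psi> l $ idx3 d j i j = 0" "\<psi> l $ idx3 d j j i = 0"
      using off_ghz[of l i j j] off_ghz[of l j i j] off_ghz[of l j j i] l ij by auto
    then have "\<psi> l $ idx3 d i i i * \<psi> l $ idx3 d j j j = 0"
      using mix l ij by (intro biseparable_pure_ghz_product_zero) auto
    then show ?thesis
      by auto
  qed simp
  have "?M $$ (idx3 d i i i, idx3 d j j j) =
        (\<Sum>l<m. complex_of_real (p l) * \<psi> l $ idx3 d i i i * cnj (\<psi> l $ idx3 d j j j))"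
    using ij by (subst M) (simp add: idx3_less)
  also have "\<dots> = 0"
    using sum.neutral[OF ballI[OF term0]] .
  finally have "?M $$ (idx3 d i i i, idx3 d j j j) = 0" .
  moreover have "?M $$ (idx3 d i i i, idx3 d j j j) = \<rho> $$ (i, j)"
    using ij by (intro embed_mat_at inj_on_idx3_diag) (simp_all add: idx3_less)
  ultimately show False
    using \<rho> by simp
qed

lemma incoherent_operation_cnot_idx: "incoherent_operation (d ^ 3) [perm_mat (d ^ 3) (cnot_idx d)]"
  by (intro incoherent_operation_perm_mat inj_on_cnot_idx) (auto intro: cnot_idx_less)

lemma not_genuinely_tripartite_entangled_if_diag:
  assumes d: "0 < d" and \<rho>: "density d \<rho>" "is_diag d \<rho>" and Ks: "incoherent_operation (d ^ 3) Ks"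
  shows "\<not> genuinely_tripartite_entangled d
           (apply_kraus (d ^ 3) Ks (kron (kron \<rho> (ket0_proj d)) (ket0_proj d)))"
proof
  let ?\<tau> = "kron (kron \<rho> (ket0_proj d)) (ket0_proj d)"
  have "?\<tau> = embed_mat (d ^ 3) d (\<lambda>i. idx3 d i 0 0) \<rho>"
    using \<rho>(1) d by (simp add: density_def kron_ket0_proj_ket0_proj)
  then have "incoherent_state (d ^ 3) ?\<tau>"
    unfolding incoherent_state_def using \<rho> d
    by (auto intro!: density_embed_mat is_diag_embed_mat simp: inj_on_def idx3_eq_iff idx3_less)
  with Ks have "is_diag (d ^ 3) (apply_kraus (d ^ 3) Ks ?\<tau>)"
    by (rule incoherent_operation_is_diag)
  moreover assume "genuinely_tripartite_entangled d (apply_kraus (d ^ 3) Ks ?\<tau>)"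
  ultimately show False
    using biseparable_mixed_if_diag unfolding genuinely_tripartite_entangled_def by blast
qed

lemma genuinely_tripartite_entangled_cnot_idx:
  assumes d: "0 < d" and \<rho>: "coherent_state d \<rho>"
  shows "genuinely_tripartite_entangled d
           (apply_kraus (d ^ 3) [perm_mat (d ^ 3) (cnot_idx d)] (kron (kron \<rho> (ket0_proj d)) (ket0_proj d)))"
proof -
  obtain i j where ij: "i < d" "j < d" "i \<noteq> j" "\<rho> $$ (i, j) \<noteq> 0"
    using \<rho> unfolding coherent_state_def is_diag_def by blast
  have "apply_kraus (d ^ 3) [perm_mat (d ^ 3) (cnot_idx d)] (kron (kron \<rho> (ket0_proj d)) (ket0_proj d)) =
        embed_mat (d ^ 3) d (\<lambda>t. idx3 d t t t) \<rho>"
    using \<rho> d by (simp add: coherent_state_def density_def kron_ket0_proj_ket0_proj apply_kraus_cnot_idx)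
  then show ?thesis
    using density_embed_mat[OF inj_on_idx3_diag _, of d "d ^ 3" \<rho>] \<rho> ghz_not_biseparable_mixed[OF ij]
    by (simp add: genuinely_tripartite_entangled_def coherent_state_def idx3_less)
qed

theorem theorem4:
  fixes d :: nat and \<rho>s :: "complex mat"
  assumes "d \<ge> 2" and "density d \<rho>s"
  shows "(\<exists>Ks. incoherent_operation (d^3) Ks \<and>
            genuinely_tripartite_entangled d
              (apply_kraus (d^3) Ks (kron (kron \<rho>s (ket0_proj d)) (ket0_proj d))))
         \<longleftrightarrow> coherent_state d \<rho>s"
proof
  have d: "0 < d"
    using assms(1) by simp
  show "coherent_state d \<rho>s"
    if "\<exists>Ks. incoherent_operation (d ^ 3) Ks \<and>
      genuinely_tripartite_entangled d (apply_kraus (d ^ 3) Ks (kron (kron \<rho>s (ket0_proj d)) (ket0_proj d)))"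
    using that not_genuinely_tripartite_entangled_if_diag[OF d assms(2)] assms(2)
    unfolding coherent_state_def by blast
  show "\<exists>Ks. incoherent_operation (d ^ 3) Ks \<and>
      genuinely_tripartite_entangled d (apply_kraus (d ^ 3) Ks (kron (kron \<rho>s (ket0_proj d)) (ket0_proj d)))"
    if "coherent_state d \<rho>s"
    using incoherent_operation_cnot_idx genuinely_tripartite_entangled_cnot_idx[OF d that] by blast
qed

end
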